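(* Let $r\ge 6$ and $n\ge 1$ be integers, and let $P$ be a doubly-stochastic $n\times n$ matrix with $P(i,j)\le \frac1r$ for all $i,j$. Then $\mathrm{per}(P)\le(\sqrt2)^n F(P)$.
   Context: A doubly-stochastic matrix is an entrywise non-negative square matrix all of whose row and column sums equal $1$. $\mathrm{per}$ is the permanent. $F(P)=\prod_{1\le i,j\le n}(1-P(i,j))^{1-P(i,j)}$, with $0^0=1$. *)

theory Defs
  imports "HOL-Analysis.Analysis"
begin

definition per :: "real ^ 'n ^ 'n \<Rightarrow> real" where
  "per A = (\<Sum>p\<in>{p. p permutes (UNIV :: 'n set)}. \<Prod>i\<in>UNIV. A $ i $ p i)"

definition doubly_stochastic :: "real ^ 'n ^ 'n \<Rightarrow> bool" where
  "doubly_stochastic P \<longleftrightarrow>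
     (\<forall>i j. 0 \<le> P $ i $ j) \<and>
     (\<forall>i. (\<Sum>j\<in>UNIV. P $ i $ j) = 1) \<and>
     (\<forall>j. (\<Sum>i\<in>UNIV. P $ i $ j) = 1)"

definition self_pow :: "real \<Rightarrow> real" where
  "self_pow x = (if x = 0 then 1 else x powr x)"

definition F :: "real ^ 'n ^ 'n \<Rightarrow> real" where
  "F P = (\<Prod>i\<in>UNIV. \<Prod>j\<in>UNIV. self_pow (1 - P $ i $ j))"

end

theory Submission
  imports Defs "HOL-Analysis.Harmonic_Numbers"
begin

text \<open>
  An entropy argument in the style of Radhakrishnan's proof of Bregman's theorem. Expanding the
  permanent along a row and applying the log-sum inequality inductively gives
  \<open>per A \<cdot> ln (per A) \<le> \<Sum>\<sigma> w(\<sigma>) T(\<sigma>)\<close>, where \<open>w(\<sigma>) = \<Prod>i. A i (\<sigma> i)\<close> and \<open>T(\<sigma>)\<close> sums over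
  the rows the mean of \<open>ln\<close> over the grid of \<open>n\<close> equally spaced points from \<open>A i (\<sigma> i)\<close> to the
  row sum; concavity of \<open>ln\<close> is what makes averaging over the expanded row work. For a row sum
  \<open>1\<close> and \<open>c = A i (\<sigma> i)\<close>, the trapezoid rule bounds that mean by \<open>\<integral>\<^sub>c\<^sup>1 ln / (1 - c)\<close>, which for
  \<open>c \<le> 1/6\<close> is at most \<open>\<Sum>j (1 - A i j) ln (1 - A i j) + ln 2 / 2\<close>. Hence
  \<open>ln (per A) \<le> ln (F A) + n ln 2 / 2\<close>.
\<close>

section \<open>The mean of ln along a ramp\<close>

lemma ln_ge_one_minus_inverse: "0 < x \<Longrightarrow> 1 - 1/x \<le> ln (x::real)"
  using ln_le_minus_one[of "1/x"] by (simp add: ln_div)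

definition ln_primitive :: "real \<Rightarrow> real" where
  "ln_primitive t = t * ln t - t"

text \<open>\<open>ln_primitive\<close> is an antiderivative of \<open>ln\<close>; by concavity the trapezoid rule underestimates.\<close>

lemma trapezoid_le_ln_primitive_diff:
  fixes x y :: real
  assumes x: "0 < x" and xy: "x \<le> y"
  shows "(y - x) * (ln x + ln y) / 2 \<le> ln_primitive y - ln_primitive x"
proof -
  define \<phi> where "\<phi> t = ln_primitive t - ln_primitive x - (t - x) * (ln x + ln t) / 2" for t
  have "\<phi> x \<le> \<phi> y"
  proof (rule DERIV_nonneg_imp_nondecreasing[OF xy])
    fix t assume "x \<le> t" "t \<le> y"
    hence t: "0 < t" using x by linarith
    have "(\<phi> has_real_derivative ((ln t - ln x) - (1 - x/t)) / 2) (at t)"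
      unfolding \<phi>_def ln_primitive_def using t
      by (auto intro!: derivative_eq_intros simp: field_simps)
    moreover have "1 - x/t \<le> ln t - ln x"
      using ln_ge_one_minus_inverse[of "t/x"] x t by (simp add: ln_div)
    ultimately show "\<exists>d. DERIV \<phi> t :> d \<and> 0 \<le> d" by force
  qed
  thus ?thesis by (simp add: \<phi>_def)
qed

lemma trapezoid_sum_le_ln_primitive_diff:
  fixes c \<delta> :: real
  assumes c: "0 < c" and \<delta>: "0 \<le> \<delta>"
  shows "\<delta> * (\<Sum>k<m. (ln (c + k * \<delta>) + ln (c + Suc k * \<delta>)) / 2)
           \<le> ln_primitive (c + m * \<delta>) - ln_primitive c"
proof -
  define x where "x k = c + real k * \<delta>" for k
  have "\<delta> * (\<Sum>k<m. (ln (x k) + ln (x (Suc k))) / 2)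
      = (\<Sum>k<m. (x (Suc k) - x k) * (ln (x k) + ln (x (Suc k))) / 2)"
    by (simp add: sum_distrib_left x_def algebra_simps)
  also have "\<dots> \<le> (\<Sum>k<m. ln_primitive (x (Suc k)) - ln_primitive (x k))"
    using c \<delta> by (intro sum_mono trapezoid_le_ln_primitive_diff)
      (auto simp: x_def add_pos_nonneg mult_right_mono)
  also have "\<dots> = ln_primitive (x m) - ln_primitive (x 0)"
    by (rule sum_lessThan_telescope)
  finally show ?thesis by (simp add: x_def)
qed

text \<open>For \<open>n = 1\<close> the junk value \<open>D / 0 = 0\<close> makes this \<open>ln c\<close>, as it should be.\<close>
definition ln_ramp_mean :: "nat \<Rightarrow> real \<Rightarrow> real \<Rightarrow> real" where
  "ln_ramp_mean n c D = (\<Sum>k<n. ln (c + real k * D / real (n - 1))) / real n"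

lemma ln_ramp_mean_le_ln_primitive_slope:
  fixes c :: real
  assumes n: "1 \<le> n" and c0: "0 < c" and c1: "c < 1"
  shows "ln_ramp_mean n c (1 - c) \<le> (ln_primitive 1 - ln_primitive c) / (1 - c)"
proof -
  define G where "G = ln_primitive 1 - ln_primitive c"
  have end_term: "(1 - c) * ln c / 2 \<le> G"
    using trapezoid_le_ln_primitive_diff[of c 1] c0 c1 by (simp add: G_def)
  obtain m where nm: "n = Suc m" using n by (cases n) auto
  define S where "S = (\<Sum>k<Suc m. ln (c + real k * (1 - c) / real m))"
  have "(1 - c) * S \<le> real (Suc m) * G"
  proof (cases "m = 0")
    case True
    have "(1 - c) * ln c \<le> 0" using c0 c1 by (simp add: mult_nonneg_nonpos)
    thus ?thesis using end_term True by (simp add: S_def)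
  next
    case False
    define \<delta> where "\<delta> = (1 - c) / real m"
    have \<delta>: "0 \<le> \<delta>" "real m * \<delta> = 1 - c" "c + real m * \<delta> = 1"
      using False c1 by (simp_all add: \<delta>_def)
    have S_def': "S = (\<Sum>k<Suc m. ln (c + real k * \<delta>))"
      unfolding S_def \<delta>_def by (simp add: field_simps)
    have "\<delta> * (\<Sum>k<m. (ln (c + k * \<delta>) + ln (c + Suc k * \<delta>)) / 2) \<le> G"
      using trapezoid_sum_le_ln_primitive_diff[OF c0 \<delta>(1), of m] \<delta>(3) by (simp add: G_def)
    also have "(\<Sum>k<m. (ln (c + k * \<delta>) + ln (c + Suc k * \<delta>)) / 2) = (2 * S - ln c) / 2"
      unfolding S_def' sum_divide_distrib[symmetric] sum.distrib
      using sum.lessThan_Suc_shift[of "\<lambda>k. ln (c + real k * \<delta>)" m] \<delta>(3) by simp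
    finally have "\<delta> * (2 * S - ln c) / 2 \<le> G" by simp
    hence "real m * (\<delta> * (2 * S - ln c) / 2) \<le> real m * G"
      by (rule mult_left_mono) simp
    hence "(1 - c) * (2 * S - ln c) / 2 \<le> real m * G"
      using \<delta>(2) by (simp add: mult.assoc[symmetric])
    thus ?thesis using end_term by (simp add: algebra_simps)
  qed
  thus ?thesis using c1 nm by (simp add: ln_ramp_mean_def S_def G_def field_simps)
qed

lemma ln2_ge_693_div_1000: "693/1000 \<le> ln (2::real)"
  using ln_approx_bounds(1)[of 2 3] by (simp add: eval_nat_numeral)

lemma ln3_le_10987_div_10000: "ln (3::real) \<le> 10987/10000"
  using ln_approx_bounds(1)[of 3 5] by (simp add: eval_nat_numeral)

lemma neg_mult_ln_le:
  fixes c :: real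
  assumes c0: "0 < c" and c1: "c \<le> 1/6"
  shows "- (c * ln c) \<le> (1 - c) * (c^2 + ln 2) / 2"
proof -
  have "ln (1/(6*c)) \<le> 1/(6*c) - 1" using c0 by (intro ln_le_minus_one) simp
  moreover have "ln (1/(6*c)) = - ln 2 - ln 3 - ln c" using c0 ln_mult[of 2 3]
    by (simp add: ln_div ln_mult)
  ultimately have "- ln c \<le> ln 2 + ln 3 + 1/(6*c) - 1" by linarith
  hence "c * (- ln c) \<le> c * (ln 2 + ln 3 + 1/(6*c) - 1)" using c0 by (intro mult_left_mono) auto
  also have "\<dots> = c * ln 3 + (3 * c - 1) * ln 2 / 2 + (1 - c) * ln 2 / 2 - c + 1/6"
    using c0 by (simp add: field_simps)
  also have "\<dots> \<le> c * (10987/10000) + (3 * c - 1) * (693/1000) / 2 + (1 - c) * ln 2 / 2 - c + 1/6"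
  proof -
    have "c * ln 3 \<le> c * (10987/10000)" using c0 ln3_le_10987_div_10000 by (intro mult_left_mono) auto
    moreover have "(3 * c - 1) * ln 2 \<le> (3 * c - 1) * (693/1000)"
      using c1 ln2_ge_693_div_1000 by (intro mult_left_mono_neg) auto
    ultimately show ?thesis by argo
  qed
  also have "\<dots> \<le> (1 - c) * (c^2 + ln 2) / 2"
  proof -
    have "c * (10987/10000) + (3 * c - 1) * (693/1000) / 2 - c + 1/6 \<le> (c^2 - c^3) / 2"
    proof (cases "c \<le> 157/1000")
      case True
      have "c^3 \<le> c^2" using c0 c1 by (simp add: power_decreasing_iff)
      thus ?thesis using True by argo
    next
      case False
      have "(157/1000) * (157/1000) \<le> c * c" using False by (intro mult_mono) auto
      hence "(5/6) * ((157/1000) * (157/1000)) \<le> (1 - c) * (c * c)"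
        using c0 c1 False by (intro mult_mono) auto
      hence "(5/6) * ((157/1000) * (157/1000)) \<le> c^2 - c^3"
        by (simp add: power2_eq_square power3_eq_cube algebra_simps)
      thus ?thesis using c1 by argo
    qed
    thus ?thesis by (simp add: field_simps power2_eq_square power3_eq_cube)
  qed
  finally show ?thesis by simp
qed

lemma ln_primitive_slope_le:
  fixes c :: real
  assumes c0: "0 < c" and c1: "c \<le> 1/6"
  shows "(ln_primitive 1 - ln_primitive c) / (1 - c) \<le> -1 + c^2/2 + ln 2 / 2"
proof -
  have "ln_primitive 1 - ln_primitive c = - (1 - c) + - (c * ln c)"
    by (simp add: ln_primitive_def algebra_simps)
  also have "\<dots> \<le> (1 - c) * (-1 + c^2/2 + ln 2 / 2)"
    using neg_mult_ln_le[OF c0 c1] by (simp add: field_simps)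
  finally show ?thesis using c1 by (simp add: pos_divide_le_eq mult.commute)
qed

lemma ln_ge_half_diff_inverse:
  assumes y0: "0 < y" and y1: "y \<le> 1"
  shows "(y - 1/y) / 2 \<le> ln (y::real)"
proof -
  define \<phi> where "\<phi> t = ln t - (t - 1/t) / 2" for t :: real
  have "\<phi> 1 \<le> \<phi> y"
  proof (rule DERIV_nonpos_imp_nonincreasing[OF y1])
    fix t assume "y \<le> t" "t \<le> 1"
    hence t: "0 < t" using y0 by linarith
    have "(\<phi> has_real_derivative - ((t - 1)^2 / (2 * t^2))) (at t)"
      unfolding \<phi>_def using t
      by (auto intro!: derivative_eq_intros simp: field_simps power2_eq_square)
    thus "\<exists>d. DERIV \<phi> t :> d \<and> d \<le> 0" by force
  qed
  thus ?thesis by (simp add: \<phi>_def)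
qed

lemma one_minus_mult_ln_one_minus_ge:
  fixes p :: real
  assumes p0: "0 \<le> p" and p1: "p < 1"
  shows "- p + p^2/2 \<le> (1 - p) * ln (1 - p)"
proof -
  have y: "0 < 1 - p" using p1 by simp
  have "(1 - p) * (((1 - p) - 1/(1 - p)) / 2) \<le> (1 - p) * ln (1 - p)"
    using ln_ge_half_diff_inverse[OF y] p0 y by (intro mult_left_mono) auto
  moreover have "(1 - p) * (((1 - p) - 1/(1 - p)) / 2) = - p + p^2/2"
    using y by (simp add: field_simps power2_eq_square)
  ultimately show ?thesis by simp
qed

lemma ln_ramp_mean_le_row_entropy:
  fixes a :: "'j::finite \<Rightarrow> real"
  assumes nn: "\<And>j. 0 \<le> a j" and small: "\<And>j. a j \<le> 1/6" and sum1: "(\<Sum>j\<in>UNIV. a j) = 1"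
    and pos: "0 < a j0" and n: "1 \<le> n"
  shows "ln_ramp_mean n (a j0) (1 - a j0) \<le> (\<Sum>j\<in>UNIV. (1 - a j) * ln (1 - a j)) + ln 2 / 2"
proof -
  have "ln_ramp_mean n (a j0) (1 - a j0) \<le> (ln_primitive 1 - ln_primitive (a j0)) / (1 - a j0)"
    using small[of j0] by (intro ln_ramp_mean_le_ln_primitive_slope[OF n pos]) simp
  also have "\<dots> \<le> -1 + (a j0)^2/2 + ln 2 / 2"
    by (rule ln_primitive_slope_le[OF pos small])
  also have "-1 + (a j0)^2/2 \<le> (\<Sum>j\<in>UNIV. - a j + (a j)^2/2)"
    using sum1 member_le_sum[of j0 UNIV "\<lambda>j. (a j)^2/2"] by (simp add: sum_subtractf)
  also have "\<dots> \<le> (\<Sum>j\<in>UNIV. (1 - a j) * ln (1 - a j))"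
  proof (intro sum_mono one_minus_mult_ln_one_minus_ge nn)
    show "a j < 1" for j using small[of j] by simp
  qed
  finally show ?thesis by simp
qed

lemma sum_ln_le_card_mult_ln_mean:
  fixes y :: "'a \<Rightarrow> real"
  assumes K: "finite K" "K \<noteq> {}" and y: "\<And>i. i \<in> K \<Longrightarrow> 0 < y i"
  shows "(\<Sum>i\<in>K. ln (y i)) \<le> real (card K) * ln ((\<Sum>i\<in>K. y i) / real (card K))"
proof -
  define \<mu> where "\<mu> = (\<Sum>i\<in>K. y i) / real (card K)"
  have cK: "0 < real (card K)" using K by (simp add: card_gt_0_iff)
  have sum_y: "0 < (\<Sum>i\<in>K. y i)" using K y by (intro sum_pos) auto
  hence \<mu>: "0 < \<mu>" using cK by (simp add: \<mu>_def)
  have "ln (y i) \<le> ln \<mu> + y i / \<mu> - 1" if "i \<in> K" for i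
    using ln_le_minus_one[of "y i / \<mu>"] y[OF that] \<mu> by (simp add: ln_div)
  hence "(\<Sum>i\<in>K. ln (y i)) \<le> (\<Sum>i\<in>K. ln \<mu> + y i / \<mu> - 1)"
    by (rule sum_mono)
  also have "\<dots> = real (card K) * ln \<mu> + (\<Sum>i\<in>K. y i) / \<mu> - real (card K)"
    by (simp add: sum.distrib sum_subtractf sum_divide_distrib[symmetric])
  also have "\<dots> = real (card K) * ln \<mu>"
    using cK sum_y by (simp add: \<mu>_def)
  finally show ?thesis by (simp add: \<mu>_def)
qed

text \<open>Jensen's inequality for \<open>ln\<close>, applied at each grid point of the ramps towards \<open>D - b i0\<close>.\<close>
lemma ln_ramp_mean_Suc_card_ge:
  fixes b :: "'a \<Rightarrow> real"
  assumes K: "finite K" and c: "0 < c" and b: "\<And>i. i \<in> K \<Longrightarrow> 0 \<le> b i"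
  shows "ln (c + (\<Sum>i\<in>K. b i)) + (\<Sum>i0\<in>K. ln_ramp_mean (card K) c ((\<Sum>i\<in>K. b i) - b i0))
         \<le> real (Suc (card K)) * ln_ramp_mean (Suc (card K)) c (\<Sum>i\<in>K. b i)"
proof (cases "K = {}")
  case True
  thus ?thesis by (simp add: ln_ramp_mean_def)
next
  case False
  define m where "m = card K"
  define D where "D = (\<Sum>i\<in>K. b i)"
  have m: "0 < m" using False K by (simp add: m_def card_gt_0_iff)
  have bD: "b i0 \<le> D" if "i0 \<in> K" for i0
    unfolding D_def using K b that by (intro member_le_sum) auto
  have column: "(\<Sum>i0\<in>K. ln (c + real k * (D - b i0) / real (m - 1)))
                  \<le> real m * ln (c + real k * D / real m)" if k: "k < m" for k
  proof -
    have "(\<Sum>i0\<in>K. ln (c + real k * (D - b i0) / real (m - 1)))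
          \<le> real m * ln ((\<Sum>i0\<in>K. c + real k * (D - b i0) / real (m - 1)) / real m)"
      unfolding m_def using K False c bD
      by (intro sum_ln_le_card_mult_ln_mean) (auto intro!: add_pos_nonneg divide_nonneg_nonneg)
    also have "(\<Sum>i0\<in>K. c + real k * (D - b i0) / real (m - 1)) / real m = c + real k * D / real m"
    proof (cases "m = 1")
      case True
      thus ?thesis using k by (simp add: m_def)
    next
      case False
      define t where "t = real k / real (m - 1)"
      have "(\<Sum>i0\<in>K. c + real k * (D - b i0) / real (m - 1)) = (\<Sum>i0\<in>K. c + t * (D - b i0))"
        by (simp add: t_def)
      also have "\<dots> = real m * c + t * (\<Sum>i0\<in>K. D - b i0)"
        by (simp add: sum.distrib sum_distrib_left m_def)
      also have "(\<Sum>i0\<in>K. D - b i0) = (real m - 1) * D"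
        by (simp add: sum_subtractf m_def D_def algebra_simps)
      also have "t * ((real m - 1) * D) = real k * D"
        using m False by (simp add: t_def of_nat_diff)
      finally show ?thesis using m by (simp add: field_simps)
    qed
    finally show ?thesis .
  qed
  have "(\<Sum>i0\<in>K. ln_ramp_mean m c (D - b i0))
        = (\<Sum>k<m. \<Sum>i0\<in>K. ln (c + real k * (D - b i0) / real (m - 1))) / real m"
    unfolding ln_ramp_mean_def by (simp add: sum_divide_distrib[symmetric] sum.swap[of _ K])
  also have "\<dots> \<le> (\<Sum>k<m. real m * ln (c + real k * D / real m)) / real m"
    using m by (intro divide_right_mono sum_mono column) auto
  also have "\<dots> = real (Suc m) * ln_ramp_mean (Suc m) c D - ln (c + D)"
    using m by (simp add: ln_ramp_mean_def sum_distrib_left[symmetric])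
  finally show ?thesis by (simp add: m_def D_def)
qed

section \<open>An entropy bound for permanents\<close>

definition injs :: "'a set \<Rightarrow> 'b set \<Rightarrow> ('a \<Rightarrow> 'b) set" where
  "injs I J = {\<sigma> \<in> I \<rightarrow>\<^sub>E J. inj_on \<sigma> I}"

lemma finite_injs: "finite I \<Longrightarrow> finite J \<Longrightarrow> finite (injs I J)"
  unfolding injs_def by (rule finite_subset[OF _ finite_PiE[of I "\<lambda>_. J"]]) auto

lemma injs_empty: "injs {} J = {\<lambda>_. undefined}"
  unfolding injs_def by auto

lemma permutes_UNIV_eq_injs: "{p. p permutes (UNIV :: 'n::finite set)} = injs UNIV UNIV"
proof -
  have "p permutes (UNIV :: 'n set) \<longleftrightarrow> inj p" for p :: "'n \<Rightarrow> 'n"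
    using permutes_inj finite_UNIV_inj_surj[of p] bij_imp_permutes[of p UNIV]
    by (auto simp: bij_def)
  thus ?thesis unfolding injs_def by auto
qed

lemma sum_comp_injs:
  assumes "finite I" "finite J" "card I = card J" "\<sigma> \<in> injs I J"
  shows "(\<Sum>i\<in>I. g (\<sigma> i)) = (\<Sum>j\<in>J. g j)"
proof -
  have inj: "inj_on \<sigma> I" and sub: "\<sigma> ` I \<subseteq> J" using assms(4) by (auto simp: injs_def)
  have "\<sigma> ` I = J"
    using card_subset_eq[OF assms(2) sub] card_image[OF inj] assms(3) by simp
  thus ?thesis using sum.reindex[OF inj, of g] by simp
qed

lemma bij_betw_fun_upd_injs:
  assumes i0: "i0 \<in> I"
  shows "bij_betw (\<lambda>(j, \<tau>). \<tau>(i0 := j)) (SIGMA j:J. injs (I - {i0}) (J - {j})) (injs I J)"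
proof (rule bij_betw_byWitness[where f' = "\<lambda>\<sigma>. (\<sigma> i0, \<sigma>(i0 := undefined))"])
  show "\<forall>x \<in> (SIGMA j:J. injs (I - {i0}) (J - {j})).
          (\<lambda>\<sigma>. (\<sigma> i0, \<sigma>(i0 := undefined))) ((\<lambda>(j, \<tau>). \<tau>(i0 := j)) x) = x"
  proof
    fix x assume "x \<in> (SIGMA j:J. injs (I - {i0}) (J - {j}))"
    then obtain j \<tau> where x: "\<tau> \<in> injs (I - {i0}) (J - {j})" "x = (j, \<tau>)"
      by (rule SigmaE)
    have "\<tau> \<in> (I - {i0}) \<rightarrow>\<^sub>E (J - {j})" using x(1) by (simp add: injs_def)
    hence "\<tau> i0 = undefined" by (rule PiE_arb) simp
    thus "(\<lambda>\<sigma>. (\<sigma> i0, \<sigma>(i0 := undefined))) ((\<lambda>(j, \<tau>). \<tau>(i0 := j)) x) = x"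
      using x(2) by (simp add: fun_upd_idem)
  qed
  show "\<forall>\<sigma> \<in> injs I J. (\<lambda>(j, \<tau>). \<tau>(i0 := j)) (\<sigma> i0, \<sigma>(i0 := undefined)) = \<sigma>"
    by simp
  show "(\<lambda>(j, \<tau>). \<tau>(i0 := j)) ` (SIGMA j:J. injs (I - {i0}) (J - {j})) \<subseteq> injs I J"
  proof clarsimp
    fix j \<tau> assume j: "j \<in> J" and \<tau>: "\<tau> \<in> injs (I - {i0}) (J - {j})"
    have "I = insert i0 (I - {i0})" using i0 by auto
    moreover have "\<tau> \<in> (I - {i0}) \<rightarrow>\<^sub>E (J - {j})" "inj_on \<tau> (I - {i0})"
      using \<tau> by (auto simp: injs_def)
    ultimately show "\<tau>(i0 := j) \<in> injs I J"
      using j unfolding injs_def by (auto simp: PiE_def Pi_def extensional_def inj_on_def)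
  qed
  show "(\<lambda>\<sigma>. (\<sigma> i0, \<sigma>(i0 := undefined))) ` injs I J \<subseteq> (SIGMA j:J. injs (I - {i0}) (J - {j}))"
  proof clarsimp
    fix \<sigma> assume "\<sigma> \<in> injs I J"
    hence "\<sigma> \<in> I \<rightarrow>\<^sub>E J" "inj_on \<sigma> I" by (auto simp: injs_def)
    thus "\<sigma> i0 \<in> J \<and> \<sigma>(i0 := undefined) \<in> injs (I - {i0}) (J - {\<sigma> i0})"
      using i0 unfolding injs_def by (auto simp: PiE_def Pi_def extensional_def inj_on_def)
  qed
qed
lemma sum_injs_expand:
  fixes f :: "('a \<Rightarrow> 'b) \<Rightarrow> 'c::comm_monoid_add"
  assumes I: "finite I" and J: "finite J" and i0: "i0 \<in> I"
  shows "(\<Sum>\<sigma>\<in>injs I J. f \<sigma>) = (\<Sum>j\<in>J. \<Sum>\<tau>\<in>injs (I - {i0}) (J - {j}). f (\<tau>(i0 := j)))"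
  using sum.reindex_bij_betw[OF bij_betw_fun_upd_injs[OF i0], of f] I J
  by (simp add: sum.Sigma finite_injs case_prod_beta)


lemma log_sum_inequality:
  fixes a p :: "'b \<Rightarrow> real"
  assumes J: "finite J" and a: "\<And>j. j \<in> J \<Longrightarrow> 0 \<le> a j" and p: "\<And>j. j \<in> J \<Longrightarrow> 0 \<le> p j"
  shows "(\<Sum>j\<in>J. a j * p j) * ln (\<Sum>j\<in>J. a j * p j)
           \<le> (\<Sum>j\<in>J. a j * p j) * ln (\<Sum>j\<in>J. a j) + (\<Sum>j\<in>J. a j * (p j * ln (p j)))"
proof -
  define P where "P = (\<Sum>j\<in>J. a j * p j)"
  define R where "R = (\<Sum>j\<in>J. a j)"
  have "0 \<le> P" unfolding P_def using a p by (simp add: sum_nonneg)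
  show ?thesis
  proof (cases "P = 0")
    case True
    hence "\<forall>j\<in>J. a j * p j = 0"
      using J a p unfolding P_def by (subst (asm) sum_nonneg_eq_0_iff) auto
    hence "(\<Sum>j\<in>J. a j * (p j * ln (p j))) = 0" by (intro sum.neutral) auto
    thus ?thesis using True by (simp add: P_def[symmetric])
  next
    case False
    hence P: "0 < P" using \<open>0 \<le> P\<close> by simp
    have "R \<noteq> 0"
    proof
      assume "R = 0"
      hence "\<forall>j\<in>J. a j = 0" using J a unfolding R_def by (subst (asm) sum_nonneg_eq_0_iff) auto
      thus False using False by (simp add: P_def)
    qed
    hence R: "0 < R" using a by (simp add: R_def sum_nonneg order_le_neq_trans)
    define y where "y = P / R"
    have y: "0 < y" using P R by (simp add: y_def)
    have "p j * ln y + p j - y \<le> p j * ln (p j)" if "j \<in> J" for j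
    proof (cases "p j = 0")
      case True
      thus ?thesis using y by simp
    next
      case False
      hence pj: "0 < p j" using p[OF that] by simp
      have "p j * ln (y / p j) \<le> p j * (y / p j - 1)"
        using pj y by (intro mult_left_mono ln_le_minus_one) auto
      moreover have "p j * ln (y / p j) = p j * ln y - p j * ln (p j)"
        using pj y by (simp add: ln_div right_diff_distrib)
      moreover have "p j * (y / p j - 1) = y - p j" using pj by (simp add: field_simps)
      ultimately show ?thesis by linarith
    qed
    hence "(\<Sum>j\<in>J. a j * (p j * ln y + p j - y)) \<le> (\<Sum>j\<in>J. a j * (p j * ln (p j)))"
      using a by (intro sum_mono mult_left_mono) auto
    also have "(\<Sum>j\<in>J. a j * (p j * ln y + p j - y)) = P * ln y + P - y * R"
      unfolding P_def R_def
      by (simp add: sum.distrib sum_subtractf sum_distrib_left sum_distrib_right algebra_simps)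
    also have "\<dots> = P * ln P - P * ln R"
      using P R by (simp add: y_def ln_div algebra_simps)
    finally show ?thesis unfolding P_def[symmetric] R_def[symmetric] by simp
  qed
qed

definition inj_weight :: "('a \<Rightarrow> 'b \<Rightarrow> real) \<Rightarrow> 'a set \<Rightarrow> ('a \<Rightarrow> 'b) \<Rightarrow> real" where
  "inj_weight a I \<sigma> = (\<Prod>i\<in>I. a i (\<sigma> i))"

definition per_on :: "('a \<Rightarrow> 'b \<Rightarrow> real) \<Rightarrow> 'a set \<Rightarrow> 'b set \<Rightarrow> real" where
  "per_on a I J = (\<Sum>\<sigma>\<in>injs I J. inj_weight a I \<sigma>)"

lemma inj_weight_nonneg: "(\<And>i j. 0 \<le> a i j) \<Longrightarrow> 0 \<le> inj_weight a I \<sigma>"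
  unfolding inj_weight_def by (intro prod_nonneg) auto

lemma per_on_nonneg: "(\<And>i j. 0 \<le> a i j) \<Longrightarrow> 0 \<le> per_on a I J"
  unfolding per_on_def by (intro sum_nonneg inj_weight_nonneg)

lemma inj_weight_fun_upd:
  assumes "finite I" "i0 \<in> I"
  shows "inj_weight a I (\<tau>(i0 := j)) = a i0 j * inj_weight a (I - {i0}) \<tau>"
  unfolding inj_weight_def using assms by (simp add: prod.remove)

lemma inj_weight_pos_imp_pos:
  assumes "finite I" "\<And>i j. 0 \<le> a i j" "0 < inj_weight a I \<sigma>" "i \<in> I"
  shows "0 < a i (\<sigma> i)"
proof -
  have "a i (\<sigma> i) \<noteq> 0"
  proof
    assume "a i (\<sigma> i) = 0"
    hence "inj_weight a I \<sigma> = 0" unfolding inj_weight_def using assms(1,4) by (intro prod_zero) auto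
    thus False using assms(3) by simp
  qed
  thus ?thesis using assms(2)[of i "\<sigma> i"] by simp
qed

lemma per_on_expand:
  assumes "finite I" "finite J" "i0 \<in> I"
  shows "per_on a I J = (\<Sum>j\<in>J. a i0 j * per_on a (I - {i0}) (J - {j}))"
  unfolding per_on_def sum_injs_expand[OF assms] inj_weight_fun_upd[OF assms(1,3)]
  by (simp add: sum_distrib_left)

text \<open>
  Radhakrishnan's average, over orderings of the rows, of the sum over \<open>i\<close> of \<open>ln\<close> of the mass
  of row \<open>i\<close> on the columns \<open>\<sigma> i'\<close> of the rows \<open>i'\<close> not preceding \<open>i\<close>; the mass over a random
  \<open>k\<close>-set of the other rows is replaced by \<open>k / (card I - 1)\<close> times their total.
\<close>
definition ramp_sum :: "('a \<Rightarrow> 'b \<Rightarrow> real) \<Rightarrow> ('a \<Rightarrow> 'b) \<Rightarrow> 'a set \<Rightarrow> real" where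
  "ramp_sum a \<sigma> I = (\<Sum>i\<in>I. ln_ramp_mean (card I) (a i (\<sigma> i)) (\<Sum>i'\<in>I - {i}. a i (\<sigma> i')))"

lemma ramp_sum_cong: "(\<And>i. i \<in> I \<Longrightarrow> \<sigma> i = \<sigma>' i) \<Longrightarrow> ramp_sum a \<sigma> I = ramp_sum a \<sigma>' I"
  unfolding ramp_sum_def by (intro sum.cong refl) auto

lemma sum_swap_off_diagonal:
  assumes "finite I"
  shows "(\<Sum>i0\<in>I. \<Sum>i\<in>I - {i0}. f i0 i) = (\<Sum>i\<in>I. \<Sum>i0\<in>I - {i}. f i0 i)"
proof -
  have "(\<Sum>i0\<in>I. \<Sum>i\<in>I - {i0}. f i0 i) = (\<Sum>x\<in>I. \<Sum>y\<in>{y\<in>I. x \<noteq> y}. f x y)"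
    by (intro sum.cong refl) auto
  also have "\<dots> = (\<Sum>y\<in>I. \<Sum>x\<in>{x\<in>I. x \<noteq> y}. f x y)"
    by (rule sum.swap_restrict[OF assms assms])
  also have "\<dots> = (\<Sum>i\<in>I. \<Sum>i0\<in>I - {i}. f i0 i)"
    by (intro sum.cong refl) auto
  finally show ?thesis .
qed

lemma sum_ln_row_sum_add_ramp_sum_le:
  assumes I: "finite I" "I \<noteq> {}" and pos: "\<And>i. i \<in> I \<Longrightarrow> 0 < a i (\<sigma> i)"
    and nn: "\<And>i j. 0 \<le> a i j"
  shows "(\<Sum>i0\<in>I. ln (\<Sum>i\<in>I. a i0 (\<sigma> i)) + ramp_sum a \<sigma> (I - {i0})) \<le> real (card I) * ramp_sum a \<sigma> I"
proof -
  define D where "D i = (\<Sum>i'\<in>I - {i}. a i (\<sigma> i'))" for i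
  have card_remove: "card (I - {i}) = card I - 1" if "i \<in> I" for i using I that by simp
  have row: "(\<Sum>i\<in>I. a i0 (\<sigma> i)) = a i0 (\<sigma> i0) + D i0" if "i0 \<in> I" for i0
    unfolding D_def using I that by (simp add: sum.remove)
  have ramp: "ramp_sum a \<sigma> (I - {i0})
                = (\<Sum>i\<in>I - {i0}. ln_ramp_mean (card I - 1) (a i (\<sigma> i)) (D i - a i (\<sigma> i0)))"
    if i0: "i0 \<in> I" for i0
    unfolding ramp_sum_def card_remove[OF i0]
  proof (intro sum.cong refl)
    fix i assume i: "i \<in> I - {i0}"
    have "I - {i0} - {i} = (I - {i}) - {i0}" by auto
    moreover have "(\<Sum>i'\<in>(I - {i}) - {i0}. a i (\<sigma> i')) = D i - a i (\<sigma> i0)"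
      unfolding D_def using I i i0 by (subst sum_diff1) auto
    ultimately show "ln_ramp_mean (card I - 1) (a i (\<sigma> i)) (\<Sum>i'\<in>I - {i0} - {i}. a i (\<sigma> i')) =
       ln_ramp_mean (card I - 1) (a i (\<sigma> i)) (D i - a i (\<sigma> i0))" by simp
  qed
  have "(\<Sum>i0\<in>I. ln (\<Sum>i\<in>I. a i0 (\<sigma> i)) + ramp_sum a \<sigma> (I - {i0}))
     = (\<Sum>i0\<in>I. ln (a i0 (\<sigma> i0) + D i0))
         + (\<Sum>i0\<in>I. \<Sum>i\<in>I - {i0}. ln_ramp_mean (card I - 1) (a i (\<sigma> i)) (D i - a i (\<sigma> i0)))"
    unfolding sum.distrib[symmetric] by (rule sum.cong) (simp_all only: row ramp)
  also have "\<dots> = (\<Sum>i\<in>I. ln (a i (\<sigma> i) + D i)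
          + (\<Sum>i0\<in>I - {i}. ln_ramp_mean (card I - 1) (a i (\<sigma> i)) (D i - a i (\<sigma> i0))))"
    unfolding sum.distrib by (subst sum_swap_off_diagonal[OF I(1)]) (rule refl)
  also have "\<dots> \<le> (\<Sum>i\<in>I. real (card I) * ln_ramp_mean (card I) (a i (\<sigma> i)) (D i))"
  proof (rule sum_mono)
    fix i assume i: "i \<in> I"
    have "card I = Suc (card (I - {i}))" using I i by (simp add: card_gt_0_iff)
    thus "ln (a i (\<sigma> i) + D i)
            + (\<Sum>i0\<in>I - {i}. ln_ramp_mean (card I - 1) (a i (\<sigma> i)) (D i - a i (\<sigma> i0)))
          \<le> real (card I) * ln_ramp_mean (card I) (a i (\<sigma> i)) (D i)"
      using ln_ramp_mean_Suc_card_ge[of "I - {i}" "a i (\<sigma> i)" "\<lambda>i'. a i (\<sigma> i')"] I pos[OF i] nn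
      by (simp add: D_def card_remove[OF i])
  qed
  also have "\<dots> = real (card I) * ramp_sum a \<sigma> I"
    by (simp only: ramp_sum_def D_def sum_distrib_left)
  finally show ?thesis .
qed

lemma per_on_mult_ln_le_expand_row:
  fixes a :: "'a \<Rightarrow> 'b \<Rightarrow> real"
  assumes nn: "\<And>i j. 0 \<le> a i j" and I: "finite I" and J: "finite J" and card: "card I = card J"
    and i0: "i0 \<in> I"
    and minors: "\<And>j. j \<in> J \<Longrightarrow>
          per_on a (I - {i0}) (J - {j}) * ln (per_on a (I - {i0}) (J - {j}))
            \<le> (\<Sum>\<tau>\<in>injs (I - {i0}) (J - {j}). inj_weight a (I - {i0}) \<tau> * ramp_sum a \<tau> (I - {i0}))"
  shows "per_on a I J * ln (per_on a I J)
           \<le> (\<Sum>\<sigma>\<in>injs I J. inj_weight a I \<sigma> * (ln (\<Sum>i\<in>I. a i0 (\<sigma> i)) + ramp_sum a \<sigma> (I - {i0})))"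
proof -
  define P where "P = per_on a I J"
  define R where "R = (\<Sum>j\<in>J. a i0 j)"
  have "P * ln P \<le> P * ln R + (\<Sum>j\<in>J. a i0 j * (per_on a (I - {i0}) (J - {j})
                                   * ln (per_on a (I - {i0}) (J - {j}))))"
    unfolding P_def R_def per_on_expand[OF I J i0]
    by (rule log_sum_inequality[OF J]) (simp_all add: nn per_on_nonneg)
  also have "\<dots> \<le> P * ln R + (\<Sum>j\<in>J. a i0 j * (\<Sum>\<tau>\<in>injs (I - {i0}) (J - {j}).
                                   inj_weight a (I - {i0}) \<tau> * ramp_sum a \<tau> (I - {i0})))"
    using minors nn by (intro add_left_mono sum_mono mult_left_mono) auto
  also have "\<dots> = (\<Sum>\<sigma>\<in>injs I J. inj_weight a I \<sigma> * ln (\<Sum>i\<in>I. a i0 (\<sigma> i)))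
                   + (\<Sum>\<sigma>\<in>injs I J. inj_weight a I \<sigma> * ramp_sum a \<sigma> (I - {i0}))"
  proof -
    have "(\<Sum>i\<in>I. a i0 (\<sigma> i)) = R" if "\<sigma> \<in> injs I J" for \<sigma>
      unfolding R_def using I J card that by (rule sum_comp_injs)
    hence "P * ln R = (\<Sum>\<sigma>\<in>injs I J. inj_weight a I \<sigma> * ln (\<Sum>i\<in>I. a i0 (\<sigma> i)))"
      unfolding P_def per_on_def by (simp add: sum_distrib_right)
    moreover have "ramp_sum a (\<tau>(i0 := j)) (I - {i0}) = ramp_sum a \<tau> (I - {i0})" for \<tau> j
      by (rule ramp_sum_cong) auto
    ultimately show ?thesis
      unfolding sum_injs_expand[OF I J i0] inj_weight_fun_upd[OF I i0]
      by (simp add: sum_distrib_left mult.assoc)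
  qed
  finally show ?thesis by (simp add: P_def distrib_left sum.distrib)
qed

text \<open>Expand along a row \<open>i0\<close> with the log-sum inequality, then average over \<open>i0\<close>.\<close>
lemma per_on_mult_ln_le:
  fixes a :: "'a \<Rightarrow> 'b \<Rightarrow> real"
  assumes nn: "\<And>i j. 0 \<le> a i j" and "finite I" "finite J" "card I = card J"
  shows "per_on a I J * ln (per_on a I J) \<le> (\<Sum>\<sigma>\<in>injs I J. inj_weight a I \<sigma> * ramp_sum a \<sigma> I)"
  using assms(2-)
proof (induction "card I" arbitrary: I J)
  case 0
  hence "I = {}" "J = {}" by auto
  thus ?case by (simp add: per_on_def injs_empty inj_weight_def ramp_sum_def)
next
  case (Suc m)
  note I = Suc.prems(1) and J = Suc.prems(2) and card = Suc.prems(3)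
  define P where "P = per_on a I J"
  have expand: "P * ln P \<le> (\<Sum>\<sigma>\<in>injs I J. inj_weight a I \<sigma>
                                 * (ln (\<Sum>i\<in>I. a i0 (\<sigma> i)) + ramp_sum a \<sigma> (I - {i0})))"
    if i0: "i0 \<in> I" for i0
    unfolding P_def using nn I J card i0
  proof (rule per_on_mult_ln_le_expand_row)
    show "per_on a (I - {i0}) (J - {j}) * ln (per_on a (I - {i0}) (J - {j}))
            \<le> (\<Sum>\<tau>\<in>injs (I - {i0}) (J - {j}). inj_weight a (I - {i0}) \<tau> * ramp_sum a \<tau> (I - {i0}))"
      if "j \<in> J" for j
      using Suc.hyps(1)[of "I - {i0}" "J - {j}"] Suc.hyps(2) I J card i0 that by simp
  qed
  have "real (card I) * (P * ln P)
          \<le> (\<Sum>i0\<in>I. \<Sum>\<sigma>\<in>injs I J. inj_weight a I \<sigma>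
                           * (ln (\<Sum>i\<in>I. a i0 (\<sigma> i)) + ramp_sum a \<sigma> (I - {i0})))"
    using sum_mono[of I "\<lambda>_. P * ln P", OF expand] by simp
  also have "\<dots> = (\<Sum>\<sigma>\<in>injs I J. inj_weight a I \<sigma>
                     * (\<Sum>i0\<in>I. ln (\<Sum>i\<in>I. a i0 (\<sigma> i)) + ramp_sum a \<sigma> (I - {i0})))"
    by (simp add: sum_distrib_left sum.swap[of _ I])
  also have "\<dots> \<le> (\<Sum>\<sigma>\<in>injs I J. inj_weight a I \<sigma> * (real (card I) * ramp_sum a \<sigma> I))"
  proof (rule sum_mono)
    fix \<sigma> assume "\<sigma> \<in> injs I J"
    show "inj_weight a I \<sigma> * (\<Sum>i0\<in>I. ln (\<Sum>i\<in>I. a i0 (\<sigma> i)) + ramp_sum a \<sigma> (I - {i0}))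
            \<le> inj_weight a I \<sigma> * (real (card I) * ramp_sum a \<sigma> I)"
    proof (cases "inj_weight a I \<sigma> = 0")
      case False
      hence W: "0 < inj_weight a I \<sigma>" using inj_weight_nonneg[of a I \<sigma>] nn by simp
      have "I \<noteq> {}" using Suc.hyps(2) by auto
      have "(\<Sum>i0\<in>I. ln (\<Sum>i\<in>I. a i0 (\<sigma> i)) + ramp_sum a \<sigma> (I - {i0}))
                     \<le> real (card I) * ramp_sum a \<sigma> I"
        by (rule sum_ln_row_sum_add_ramp_sum_le)
          (simp_all add: I \<open>I \<noteq> {}\<close> inj_weight_pos_imp_pos[OF I nn W] nn)
      thus ?thesis using W by (intro mult_left_mono) auto
    qed simp
  qed
  also have "\<dots> = real (card I) * (\<Sum>\<sigma>\<in>injs I J. inj_weight a I \<sigma> * ramp_sum a \<sigma> I)"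
    by (simp add: sum_distrib_left mult_ac)
  finally show ?case
    using Suc.hyps(2) unfolding P_def by (simp del: of_nat_Suc)
qed

lemma per_on_le_exp:
  fixes a :: "'a \<Rightarrow> 'b \<Rightarrow> real"
  assumes nn: "\<And>i j. 0 \<le> a i j" and IJ: "finite I" "finite J" "card I = card J"
    and bound: "\<And>\<sigma>. \<sigma> \<in> injs I J \<Longrightarrow> 0 < inj_weight a I \<sigma> \<Longrightarrow> ramp_sum a \<sigma> I \<le> K"
  shows "per_on a I J \<le> exp K"
proof (cases "per_on a I J = 0")
  case False
  define P where "P = per_on a I J"
  have "0 \<le> P" unfolding P_def by (rule per_on_nonneg) (rule nn)
  hence P: "0 < P" using False by (simp add: P_def)
  have "P * ln P \<le> (\<Sum>\<sigma>\<in>injs I J. inj_weight a I \<sigma> * ramp_sum a \<sigma> I)"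
    unfolding P_def by (rule per_on_mult_ln_le[OF nn IJ])
  also have "\<dots> \<le> (\<Sum>\<sigma>\<in>injs I J. inj_weight a I \<sigma> * K)"
  proof (rule sum_mono)
    fix \<sigma> assume \<sigma>: "\<sigma> \<in> injs I J"
    have "0 \<le> inj_weight a I \<sigma>" by (rule inj_weight_nonneg) (rule nn)
    thus "inj_weight a I \<sigma> * ramp_sum a \<sigma> I \<le> inj_weight a I \<sigma> * K"
      using bound[OF \<sigma>] by (cases "inj_weight a I \<sigma> = 0") (auto intro: mult_left_mono)
  qed
  also have "\<dots> = P * K" by (simp add: P_def per_on_def sum_distrib_right)
  finally have "ln P \<le> K" using P by simp
  thus ?thesis using P exp_le_cancel_iff[of "ln P" K] by (simp add: P_def)
qed simp

section \<open>Matrices with small entries and unit row sums\<close>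

lemma per_eq_per_on: "per A = per_on (\<lambda>i j. A $ i $ j) UNIV UNIV"
  unfolding per_def per_on_def inj_weight_def permutes_UNIV_eq_injs ..

lemma ln_self_pow: "0 < x \<Longrightarrow> ln (self_pow x) = x * ln x"
  and self_pow_pos: "0 < x \<Longrightarrow> 0 < self_pow x"
  by (auto simp: self_pow_def ln_powr)

lemma F_pos_and_ln_F:
  fixes P :: "real ^ 'n ^ 'n"
  assumes "\<And>i j. P $ i $ j < 1"
  shows "0 < F P" and "ln (F P) = (\<Sum>i\<in>UNIV. \<Sum>j\<in>UNIV. (1 - P $ i $ j) * ln (1 - P $ i $ j))"
proof -
  have pos: "0 < self_pow (1 - P $ i $ j)" for i j using assms[of i j] by (intro self_pow_pos) simp
  thus "0 < F P" unfolding F_def by (intro prod_pos) auto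
  show "ln (F P) = (\<Sum>i\<in>UNIV. \<Sum>j\<in>UNIV. (1 - P $ i $ j) * ln (1 - P $ i $ j))"
    unfolding F_def using pos assms
    by (simp add: ln_prod prod_pos ln_self_pow less_imp_neq[symmetric])
qed

lemma ramp_sum_le_sum_row_entropy:
  fixes a :: "'n::finite \<Rightarrow> 'n \<Rightarrow> real"
  assumes nn: "\<And>i j. 0 \<le> a i j" and small: "\<And>i j. a i j \<le> 1/6"
    and rows: "\<And>i. (\<Sum>j\<in>UNIV. a i j) = 1"
    and \<sigma>: "\<sigma> \<in> injs UNIV UNIV" and pos: "\<And>i. 0 < a i (\<sigma> i)"
  shows "ramp_sum a \<sigma> UNIV
           \<le> (\<Sum>i\<in>UNIV. \<Sum>j\<in>UNIV. (1 - a i j) * ln (1 - a i j)) + CARD('n) * ln 2 / 2"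
proof -
  have "ramp_sum a \<sigma> UNIV = (\<Sum>i\<in>UNIV. ln_ramp_mean CARD('n) (a i (\<sigma> i)) (1 - a i (\<sigma> i)))"
  proof -
    have "(\<Sum>i'\<in>UNIV. a i (\<sigma> i')) = 1" for i
      using sum_comp_injs[of UNIV UNIV \<sigma> "a i"] \<sigma> rows[of i] by simp
    hence "(\<Sum>i'\<in>UNIV - {i}. a i (\<sigma> i')) = 1 - a i (\<sigma> i)" for i
      by (simp add: sum_diff1)
    thus ?thesis by (simp add: ramp_sum_def)
  qed
  also have "\<dots> \<le> (\<Sum>i\<in>UNIV. (\<Sum>j\<in>UNIV. (1 - a i j) * ln (1 - a i j)) + ln 2 / 2)"
    using nn small rows pos
    by (intro sum_mono ln_ramp_mean_le_row_entropy) (auto simp: Suc_le_eq)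
  finally show ?thesis by (simp add: sum.distrib)
qed

theorem mainTheorem10:
  fixes P :: "real ^ 'n ^ 'n" and r :: nat
  assumes "r \<ge> 6"
    and "doubly_stochastic P"
    and "\<And>i j. P $ i $ j \<le> 1 / real r"
  shows "per P \<le> sqrt 2 ^ CARD('n) * F P"
proof -
  define a where "a i j = P $ i $ j" for i j
  have nn: "\<And>i j. 0 \<le> a i j" and rows: "\<And>i. (\<Sum>j\<in>UNIV. a i j) = 1"
    using assms(2) by (auto simp: doubly_stochastic_def a_def)
  have "1 / real r \<le> 1/6" using assms(1) by (simp add: field_simps)
  hence small: "\<And>i j. a i j \<le> 1/6" using assms(3) unfolding a_def by (meson order.trans)
  have "P $ i $ j < 1" for i j using small[of i j] by (simp add: a_def)
  note F = F_pos_and_ln_F[of P, OF this, folded a_def]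
  have "per P = per_on a UNIV UNIV" unfolding per_eq_per_on a_def[abs_def] ..
  also have "\<dots> \<le> exp (ln (F P) + CARD('n) * ln 2 / 2)"
  proof (rule per_on_le_exp[OF nn])
    fix \<sigma> assume "\<sigma> \<in> injs UNIV UNIV" "0 < inj_weight a UNIV \<sigma>"
    thus "ramp_sum a \<sigma> UNIV \<le> ln (F P) + CARD('n) * ln 2 / 2"
      unfolding F(2) using inj_weight_pos_imp_pos[where a = a, OF _ nn] small
      by (intro ramp_sum_le_sum_row_entropy[OF nn _ rows]) auto
  qed simp_all
  also have "\<dots> = F P * exp (ln 2 / 2) ^ CARD('n)"
    using F(1) by (simp add: exp_add exp_of_nat_mult[symmetric] mult_ac)
  also have "exp (ln 2 / 2) = sqrt 2"
    using powr_half_sqrt[of 2] by (simp add: powr_def)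
  finally show ?thesis by (simp add: mult.commute)
qed

end
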